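(* For every $i\in\{0,\dots,m-1\}$ and every real $B$ with $B_i\le B\le\kappa B_{i+1}$, $$\Lambda_{B,\,mB\beta^{-1}}=\langle \operatorname{pr}(b_1),\dots,\operatorname{pr}(b_i)\rangle .$$
   Context: Let $m\ge2$ and $1\le p\le m$ be integers and $P\in\mathbb{R}^{m\times p}$. Vectors of $\mathbb{Z}^m$, $\mathbb{R}^m$ are row vectors and all norms $\|\cdot\|$ are Euclidean. Let $\Lambda=\{x\in\mathbb{Z}^m : xP=0\}$. For $B,\varepsilon>0$, $\Lambda_{B,\varepsilon}$ denotes the subgroup of $\mathbb{Z}^m$ generated by $\{x\in\mathbb{Z}^m : \|x\|\le B,\ \|xP\|<\varepsilon\}$. Let $\beta>0$ and let $P_\beta\in\mathbb{Z}^{m\times p}$ be such that every entry of $P_\beta-\beta P$ lies in $[-\tfrac12,\tfrac12]$. Let $R\subset\mathbb{Z}^{p+m}$ be the lattice spanned by the rows of the $m\times(p+m)$ matrix $[\,P_\beta\mid I_m\,]$, and let $b_1,\dots,b_m$ be a basis of $R$ that is LLL-reduced (Lenstra–Lenstra–Lovász, with parameter $3/4$) and satisfies $\|b_1\|\le\dots\le\|b_m\|$. Set $B_0=0$, $B_i=\|b_i\|$ for $1\le i\le m$, $\kappa=m^{-1}2^{-(m+1)/2}$, and let $\operatorname{pr}\colon\mathbb{Z}^{p+m}\to\mathbb{Z}^m$ be the projection onto the last $m$ coordinates. *)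

theory Defs
  imports Complex_Main
begin

text \<open>Vectors of Z^n / R^n are functions nat => int / nat => real, with coordinates
indexed 0..n-1 (coordinates >= n are required to be 0 where membership matters).
Matrices are functions nat => nat => _, entry (row j, column k).\<close>

definition zvecs :: "nat \<Rightarrow> (nat \<Rightarrow> int) set" where
  "zvecs n = {x. \<forall>k\<ge>n. x k = 0}"

definition rnorm :: "nat \<Rightarrow> (nat \<Rightarrow> real) \<Rightarrow> real" where
  "rnorm n x = sqrt (\<Sum>k<n. (x k)^2)"

definition znorm :: "nat \<Rightarrow> (nat \<Rightarrow> int) \<Rightarrow> real" where
  "znorm n x = rnorm n (\<lambda>k. real_of_int (x k))"

definition rinner :: "nat \<Rightarrow> (nat \<Rightarrow> real) \<Rightarrow> (nat \<Rightarrow> real) \<Rightarrow> real" where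
  "rinner n x y = (\<Sum>k<n. x k * y k)"

definition vecmat :: "nat \<Rightarrow> nat \<Rightarrow> (nat \<Rightarrow> int) \<Rightarrow> (nat \<Rightarrow> nat \<Rightarrow> real) \<Rightarrow> (nat \<Rightarrow> real)" where
  "vecmat m p x P = (\<lambda>k. if k < p then (\<Sum>j<m. real_of_int (x j) * P j k) else 0)"

definition int_span :: "(nat \<Rightarrow> int) set \<Rightarrow> (nat \<Rightarrow> int) set" where
  "int_span S = {(\<lambda>k. \<Sum>v\<in>F. c v * v k) | F c. finite F \<and> F \<subseteq> S}"

definition Lam :: "nat \<Rightarrow> nat \<Rightarrow> (nat \<Rightarrow> nat \<Rightarrow> real) \<Rightarrow> real \<Rightarrow> real \<Rightarrow> (nat \<Rightarrow> int) set" where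
  "Lam m p P B \<epsilon> = int_span {x \<in> zvecs m. znorm m x \<le> B \<and> rnorm p (vecmat m p x P) < \<epsilon>}"

text \<open>Rows (j = 0..m-1) of the m x (p+m) integer matrix [P_beta | I_m].\<close>
definition augrow :: "nat \<Rightarrow> nat \<Rightarrow> (nat \<Rightarrow> nat \<Rightarrow> int) \<Rightarrow> nat \<Rightarrow> (nat \<Rightarrow> int)" where
  "augrow m p Pb j = (\<lambda>k. if k < p then Pb j k else if k < p + m \<and> k - p = j then 1 else 0)"

definition augLattice :: "nat \<Rightarrow> nat \<Rightarrow> (nat \<Rightarrow> nat \<Rightarrow> int) \<Rightarrow> (nat \<Rightarrow> int) set" where
  "augLattice m p Pb = int_span (augrow m p Pb ` {..<m})"

definition pr :: "nat \<Rightarrow> nat \<Rightarrow> (nat \<Rightarrow> int) \<Rightarrow> (nat \<Rightarrow> int)" where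
  "pr m p x = (\<lambda>j. if j < m then x (p + j) else 0)"

definition is_lattice_basis :: "nat \<Rightarrow> nat \<Rightarrow> (nat \<Rightarrow> (nat \<Rightarrow> int)) \<Rightarrow> (nat \<Rightarrow> int) set \<Rightarrow> bool" where
  "is_lattice_basis n m b L \<longleftrightarrow>
     (\<forall>i\<in>{1..m}. b i \<in> zvecs n) \<and>
     int_span (b ` {1..m}) = L \<and>
     (\<forall>c::nat \<Rightarrow> int. (\<forall>k. (\<Sum>i=1..m. c i * b i k) = 0) \<longrightarrow> (\<forall>i\<in>{1..m}. c i = 0))"

fun gso :: "nat \<Rightarrow> (nat \<Rightarrow> (nat \<Rightarrow> real)) \<Rightarrow> nat \<Rightarrow> (nat \<Rightarrow> real)" where
  "gso n b i = (\<lambda>k. b i k - (\<Sum>j\<in>{1..<i}.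
      (rinner n (b i) (gso n b j) / rinner n (gso n b j) (gso n b j)) * gso n b j k))"

definition gs_mu :: "nat \<Rightarrow> (nat \<Rightarrow> (nat \<Rightarrow> real)) \<Rightarrow> nat \<Rightarrow> nat \<Rightarrow> real" where
  "gs_mu n b i j = rinner n (b i) (gso n b j) / rinner n (gso n b j) (gso n b j)"

definition LLL_reduced :: "real \<Rightarrow> nat \<Rightarrow> nat \<Rightarrow> (nat \<Rightarrow> (nat \<Rightarrow> real)) \<Rightarrow> bool" where
  "LLL_reduced \<delta> n m b \<longleftrightarrow>
     (\<forall>i j. 1 \<le> j \<and> j < i \<and> i \<le> m \<longrightarrow> \<bar>gs_mu n b i j\<bar> \<le> 1/2) \<and>
     (\<forall>i. 2 \<le> i \<and> i \<le> m \<longrightarrow>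
        (\<delta> - (gs_mu n b i (i-1))^2) * (rnorm n (gso n b (i-1)))^2 \<le> (rnorm n (gso n b i))^2)"

end

theory Submission
  imports Defs "HOL-Analysis.L2_Norm"
begin

text \<open>A vector \<open>x \<in> \<int>\<^sup>m\<close> lifts to the lattice vector \<open>x [P\<^sub>\<beta> | I\<^sub>m] = (x P\<^sub>\<beta>, x)\<close>, and
rounding gives \<open>|\<beta> \<parallel>x P\<parallel> - \<parallel>x P\<^sub>\<beta>\<parallel>| \<le> (m/2) \<parallel>x\<parallel>\<close>. Hence lattice vectors of length at most
\<open>B\<close> project to generators of \<open>\<Lambda>\<^bsub>B, mB/\<beta>\<^esub>\<close>, and these generators lift to lattice vectors of length
below \<open>2mB\<close>. Each of \<open>b\<^sub>1, \<dots>, b\<^sub>i\<close> has length at most \<open>B\<^sub>i \<le> B\<close>. Conversely, in an LLL-reduced basis a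
lattice vector with a nonzero coefficient at some \<open>b\<^sub>K\<close>, \<open>K > i\<close>, has length at least
\<open>2\<^sup>-\<^sup>(\<^sup>m\<^sup>-\<^sup>1\<^sup>)\<^sup>/\<^sup>2 B\<^sub>i\<^sub>+\<^sub>1\<close>, which is at least \<open>2mB\<close> because \<open>B \<le> \<kappa> B\<^sub>i\<^sub>+\<^sub>1\<close>. So the lifted
generators lie in the span of \<open>b\<^sub>1, \<dots>, b\<^sub>i\<close>, and projecting back gives the claim.\<close>

declare gso.simps[simp del]

lemma int_span_zero: "(\<lambda>k. 0) \<in> int_span S"
  unfolding int_span_def by (rule CollectI, rule exI[of _ "{}"], auto)

lemma int_span_base: "v \<in> S \<Longrightarrow> v \<in> int_span S"
  unfolding int_span_def by (rule CollectI, rule exI[of _ "{v}"], rule exI[of _ "\<lambda>_. 1"], auto)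

lemma int_span_add:
  assumes "x \<in> int_span S" "y \<in> int_span S"
  shows "(\<lambda>k. x k + y k) \<in> int_span S"
proof -
  obtain F c where F: "finite F" "F \<subseteq> S" and x: "x = (\<lambda>k. \<Sum>v\<in>F. c v * v k)"
    using assms(1) unfolding int_span_def by blast
  obtain G d where G: "finite G" "G \<subseteq> S" and y: "y = (\<lambda>k. \<Sum>v\<in>G. d v * v k)"
    using assms(2) unfolding int_span_def by blast
  define e where "e v = (if v \<in> F then c v else 0) + (if v \<in> G then d v else 0)" for v
  have F_ext: "(\<Sum>v\<in>F \<union> G. (if v \<in> F then c v else 0) * v k) = (\<Sum>v\<in>F. c v * v k)" for k
    by (rule sum.mono_neutral_cong_right) (use F G in auto)
  have G_ext: "(\<Sum>v\<in>F \<union> G. (if v \<in> G then d v else 0) * v k) = (\<Sum>v\<in>G. d v * v k)" for k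
    by (rule sum.mono_neutral_cong_right) (use F G in auto)
  have "(\<lambda>k. x k + y k) = (\<lambda>k. \<Sum>v\<in>F \<union> G. e v * v k)"
    unfolding x y e_def by (auto simp: distrib_right sum.distrib F_ext G_ext)
  moreover have "finite (F \<union> G)" "F \<union> G \<subseteq> S" using F G by auto
  ultimately show ?thesis unfolding int_span_def by blast
qed

lemma int_span_scale:
  assumes "x \<in> int_span S"
  shows "(\<lambda>k. a * x k) \<in> int_span S"
proof -
  obtain F c where F: "finite F" "F \<subseteq> S" and x: "x = (\<lambda>k. \<Sum>v\<in>F. c v * v k)"
    using assms unfolding int_span_def by blast
  have "(\<lambda>k. a * x k) = (\<lambda>k. \<Sum>v\<in>F. (a * c v) * v k)"
    unfolding x by (auto simp: sum_distrib_left mult.assoc)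
  with F show ?thesis
    unfolding int_span_def by (intro CollectI exI[of _ F] exI[of _ "\<lambda>v. a * c v"]) auto
qed

lemma int_span_sum:
  assumes "finite A" "\<And>a. a \<in> A \<Longrightarrow> f a \<in> int_span S"
  shows "(\<lambda>k. \<Sum>a\<in>A. c a * f a k) \<in> int_span S"
  using assms
proof (induction A rule: finite_induct)
  case empty
  then show ?case using int_span_zero by simp
next
  case (insert a A)
  then have "(\<lambda>k. c a * f a k) \<in> int_span S" by (intro int_span_scale) auto
  from int_span_add[OF this insert.IH] insert show ?case by simp
qed

lemma int_span_subset_int_span:
  assumes "S \<subseteq> int_span T"
  shows "int_span S \<subseteq> int_span T"
proof
  fix x assume "x \<in> int_span S"
  then obtain F c where F: "finite F" "F \<subseteq> S" and x: "x = (\<lambda>k. \<Sum>v\<in>F. c v * v k)"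
    unfolding int_span_def by blast
  show "x \<in> int_span T" unfolding x using int_span_sum[of F "\<lambda>v. v" T c] F assms by auto
qed

lemma int_span_image_coeffs:
  assumes "w \<in> int_span (f ` A)" "inj_on f A" "finite A"
  obtains d where "\<And>k. w k = (\<Sum>a\<in>A. d a * f a k)"
proof -
  obtain F c where F: "finite F" "F \<subseteq> f ` A" and w: "w = (\<lambda>k. \<Sum>v\<in>F. c v * v k)"
    using assms(1) unfolding int_span_def by blast
  define A' where "A' = A \<inter> f -` F"
  have FA: "F = f ` A'" using F unfolding A'_def by auto
  have inj: "inj_on f A'" using assms(2) unfolding A'_def by (auto intro: inj_on_subset)
  have "w k = (\<Sum>a\<in>A. (if a \<in> A' then c (f a) else 0) * f a k)" for k
  proof -
    have "w k = (\<Sum>a\<in>A'. c (f a) * f a k)" unfolding w FA using sum.reindex[OF inj] by simp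
    also have "\<dots> = (\<Sum>a\<in>A. (if a \<in> A' then c (f a) else 0) * f a k)"
      by (rule sum.mono_neutral_cong_left) (use assms(3) in \<open>auto simp: A'_def\<close>)
    finally show ?thesis .
  qed
  then show thesis by (rule that)
qed

lemma int_span_linear_relation:
  assumes "\<forall>v\<in>S. v k = (\<Sum>l\<in>A. v (g l) * c l)" "w \<in> int_span S"
  shows "w k = (\<Sum>l\<in>A. w (g l) * c l)"
proof -
  obtain F d where F: "finite F" "F \<subseteq> S" and w: "w = (\<lambda>k. \<Sum>v\<in>F. d v * v k)"
    using assms(2) unfolding int_span_def by blast
  have "(\<Sum>l\<in>A. w (g l) * c l) = (\<Sum>l\<in>A. \<Sum>v\<in>F. d v * (v (g l) * c l))"
    unfolding w by (simp add: sum_distrib_right mult.assoc)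
  also have "\<dots> = (\<Sum>v\<in>F. d v * (\<Sum>l\<in>A. v (g l) * c l))"
    by (subst sum.swap) (simp add: sum_distrib_left)
  also have "\<dots> = (\<Sum>v\<in>F. d v * v k)"
    using assms(1) F by (intro sum.cong) auto
  finally show ?thesis unfolding w by simp
qed

lemma pr_int_span: "w \<in> int_span S \<Longrightarrow> pr m p w \<in> int_span (pr m p ` S)"
proof -
  assume "w \<in> int_span S"
  then obtain F c where F: "finite F" "F \<subseteq> S" and w: "w = (\<lambda>k. \<Sum>v\<in>F. c v * v k)"
    unfolding int_span_def by blast
  have "pr m p w = (\<lambda>j. \<Sum>v\<in>F. c v * pr m p v j)"
    unfolding w pr_def by auto
  also have "\<dots> \<in> int_span (pr m p ` S)"
    using F by (intro int_span_sum) (auto intro: int_span_base)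
  finally show ?thesis .
qed


section \<open>Gram--Schmidt orthogonalisation\<close>

lemma rinner_comm: "rinner n x y = rinner n y x"
  unfolding rinner_def by (simp add: mult.commute)

lemma rinner_sum_left:
  "rinner n (\<lambda>k. \<Sum>j\<in>A. c j * f j k) y = (\<Sum>j\<in>A. c j * rinner n (f j) y)"
  unfolding rinner_def
  by (simp add: sum_distrib_left sum_distrib_right sum.swap[of _ "{..<n}"] mult.assoc)

lemma rinner_sum_right:
  "rinner n y (\<lambda>k. \<Sum>j\<in>A. c j * f j k) = (\<Sum>j\<in>A. c j * rinner n y (f j))"
  using rinner_sum_left[of n c f A y] by (simp add: rinner_comm)

lemma rinner_add_left: "rinner n (\<lambda>k. x k + z k) y = rinner n x y + rinner n z y"
  unfolding rinner_def by (simp add: distrib_right sum.distrib)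

lemma rinner_add_right: "rinner n y (\<lambda>k. x k + z k) = rinner n y x + rinner n y z"
  using rinner_add_left by (metis rinner_comm)

lemma rinner_diff_left: "rinner n (\<lambda>k. x k - z k) y = rinner n x y - rinner n z y"
  unfolding rinner_def by (simp add: left_diff_distrib sum_subtractf)

lemma rinner_self_nonneg: "0 \<le> rinner n x x"
  unfolding rinner_def by (auto intro: sum_nonneg)

lemma rinner_eq_0_if_self_eq_0: "rinner n x x = 0 \<Longrightarrow> rinner n y x = 0"
  unfolding rinner_def by (subst (asm) sum_nonneg_eq_0_iff) auto

lemma rinner_diff_scaled_self:
  "rinner n (\<lambda>k. v k - t * w k) (\<lambda>k. v k - t * w k)
     = rinner n v v - 2 * t * rinner n v w + t\<^sup>2 * rinner n w w"
proof -
  have "(v k - t * w k) * (v k - t * w k) = v k * v k - 2 * t * (v k * w k) + t\<^sup>2 * (w k * w k)" for k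
    by (simp add: algebra_simps power2_eq_square)
  then show ?thesis
    unfolding rinner_def by (simp add: sum.distrib sum_subtractf sum_distrib_left)
qed

lemma rnorm_sq: "(rnorm n x)\<^sup>2 = rinner n x x"
  unfolding rnorm_def rinner_def by (simp add: sum_nonneg power2_eq_square)

lemma gso_eq: "gso n b i = (\<lambda>k. b i k - (\<Sum>j\<in>{1..<i}. gs_mu n b i j * gso n b j k))"
  by (subst gso.simps) (simp add: gs_mu_def)

lemma basis_eq_gso_sum: "b i = (\<lambda>k. gso n b i k + (\<Sum>j\<in>{1..<i}. gs_mu n b i j * gso n b j k))"
  by (subst gso_eq) simp

text \<open>Also valid when \<open>b\<^sup>*\<^sub>j = 0\<close>, where \<open>\<mu>\<^sub>i\<^sub>j = 0\<close> by the convention \<open>x / 0 = 0\<close>.\<close>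

lemma gs_mu_mult_rinner:
  "gs_mu n b i j * rinner n (gso n b j) (gso n b j) = rinner n (b i) (gso n b j)"
proof (cases "rinner n (gso n b j) (gso n b j) = 0")
  case True
  then show ?thesis using rinner_eq_0_if_self_eq_0 by simp
next
  case False
  then show ?thesis by (simp add: gs_mu_def)
qed

lemma gso_orthogonal: "1 \<le> j \<Longrightarrow> j < k \<Longrightarrow> rinner n (gso n b k) (gso n b j) = 0"
proof (induction k arbitrary: j rule: less_induct)
  case (less k)
  have others: "rinner n (gso n b l) (gso n b j) = 0" if "l \<in> {1..<k}" "l \<noteq> j" for l
  proof (cases "l < j")
    case True
    then have "rinner n (gso n b j) (gso n b l) = 0" using less.IH[of j l] less.prems that by simp
    then show ?thesis by (simp add: rinner_comm)
  next
    case False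
    then show ?thesis using less.IH[of l j] less.prems that by simp
  qed
  have "(\<Sum>l\<in>{1..<k}. gs_mu n b k l * rinner n (gso n b l) (gso n b j))
      = gs_mu n b k j * rinner n (gso n b j) (gso n b j)"
    by (subst sum.remove[of _ j]) (use less.prems others in auto)
  moreover have "rinner n (gso n b k) (gso n b j) = rinner n (b k) (gso n b j)
      - (\<Sum>l\<in>{1..<k}. gs_mu n b k l * rinner n (gso n b l) (gso n b j))"
    by (subst gso_eq[of n b k]) (simp only: rinner_diff_left rinner_sum_left)
  ultimately show ?case by (simp add: gs_mu_mult_rinner)
qed

lemma rinner_basis_gso_eq_0: "1 \<le> j \<Longrightarrow> j < k \<Longrightarrow> rinner n (b j) (gso n b k) = 0"
proof -
  assume jk: "1 \<le> j" "j < k"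
  have "rinner n (b j) (gso n b k) = rinner n (gso n b j) (gso n b k)
      + (\<Sum>l\<in>{1..<j}. gs_mu n b j l * rinner n (gso n b l) (gso n b k))"
    by (subst basis_eq_gso_sum[of b j n]) (simp only: rinner_add_left rinner_sum_left)
  moreover have "rinner n (gso n b l) (gso n b k) = 0" if "1 \<le> l" "l < k" for l
    using gso_orthogonal[OF that, of n b] by (simp add: rinner_comm)
  ultimately show ?thesis using jk by simp
qed

lemma rinner_basis_gso_self: "rinner n (b k) (gso n b k) = rinner n (gso n b k) (gso n b k)"
proof -
  have "rinner n (b k) (gso n b k) = rinner n (gso n b k) (gso n b k)
      + (\<Sum>l\<in>{1..<k}. gs_mu n b k l * rinner n (gso n b l) (gso n b k))"
    by (subst basis_eq_gso_sum[of b k n]) (simp only: rinner_add_left rinner_sum_left)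
  moreover have "rinner n (gso n b l) (gso n b k) = 0" if "1 \<le> l" "l < k" for l
    using gso_orthogonal[OF that, of n b] by (simp add: rinner_comm)
  ultimately show ?thesis by simp
qed

lemma rinner_basis_self:
  "rinner n (b k) (b k) = rinner n (gso n b k) (gso n b k)
     + (\<Sum>l\<in>{1..<k}. (gs_mu n b k l)\<^sup>2 * rinner n (gso n b l) (gso n b l))"
proof -
  have "rinner n (b k) (b k) = rinner n (b k) (gso n b k)
      + (\<Sum>l\<in>{1..<k}. gs_mu n b k l * rinner n (b k) (gso n b l))"
    by (subst (2) basis_eq_gso_sum[of b k n]) (simp only: rinner_add_right rinner_sum_right)
  also have "\<dots> = rinner n (gso n b k) (gso n b k)
      + (\<Sum>l\<in>{1..<k}. (gs_mu n b k l)\<^sup>2 * rinner n (gso n b l) (gso n b l))"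
    by (simp only: rinner_basis_gso_self flip: gs_mu_mult_rinner) (simp add: power2_eq_square mult.assoc)
  finally show ?thesis .
qed

section \<open>Norm bounds in LLL-reduced bases\<close>

lemma sum_pow2_diff_le: "1 \<le> k \<Longrightarrow> (\<Sum>l\<in>{1..<k}. (2::real) ^ (k - l)) \<le> 2 ^ k - 2"
proof (induction k rule: dec_induct)
  case base
  then show ?case by simp
next
  case (step k)
  have "(\<Sum>l\<in>{1..<Suc k}. (2::real) ^ (Suc k - l)) = (\<Sum>l\<in>{1..<Suc k}. 2 * 2 ^ (k - l))"
    by (rule sum.cong) (auto simp: Suc_diff_le)
  also have "\<dots> = 2 * (\<Sum>l\<in>{1..<k}. 2 ^ (k - l)) + 2"
    using step.hyps by (simp add: sum_distrib_left)
  also have "\<dots> \<le> 2 * (2 ^ k - 2) + 2" using step.IH by simp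
  finally show ?case by simp
qed

context
  fixes n m :: nat and b :: "nat \<Rightarrow> nat \<Rightarrow> real"
  assumes LLL: "LLL_reduced (3/4) n m b"
begin

abbreviation gso_sq :: "nat \<Rightarrow> real" where
  "gso_sq j \<equiv> rinner n (gso n b j) (gso n b j)"

lemma LLL_gs_mu_sq_le: "1 \<le> j \<Longrightarrow> j < i \<Longrightarrow> i \<le> m \<Longrightarrow> (gs_mu n b i j)\<^sup>2 \<le> 1/4"
proof -
  assume "1 \<le> j" "j < i" "i \<le> m"
  then have "\<bar>gs_mu n b i j\<bar> \<le> 1/2" using LLL unfolding LLL_reduced_def by blast
  then have "\<bar>gs_mu n b i j\<bar>\<^sup>2 \<le> (1/2)\<^sup>2" by (intro power_mono) auto
  then show ?thesis by (simp add: power2_eq_square)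
qed

lemma LLL_gso_sq_step: "2 \<le> i \<Longrightarrow> i \<le> m \<Longrightarrow> gso_sq (i - 1) \<le> 2 * gso_sq i"
proof -
  assume i: "2 \<le> i" "i \<le> m"
  have lovasz: "(3/4 - (gs_mu n b i (i - 1))\<^sup>2) * gso_sq (i - 1) \<le> gso_sq i"
    using LLL i unfolding LLL_reduced_def rnorm_sq by auto
  have "(gs_mu n b i (i - 1))\<^sup>2 \<le> 1/4" using LLL_gs_mu_sq_le[of "i - 1" i] i by simp
  then have "1/2 * gso_sq (i - 1) \<le> (3/4 - (gs_mu n b i (i - 1))\<^sup>2) * gso_sq (i - 1)"
    by (intro mult_right_mono) (auto simp: rinner_self_nonneg)
  with lovasz show ?thesis by simp
qed

lemma LLL_gso_sq_le: "1 \<le> l \<Longrightarrow> l + d \<le> m \<Longrightarrow> gso_sq l \<le> 2 ^ d * gso_sq (l + d)"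
proof (induction d)
  case 0
  then show ?case by simp
next
  case (Suc d)
  then have "gso_sq l \<le> 2 ^ d * gso_sq (l + d)" by simp
  also have "\<dots> \<le> 2 ^ d * (2 * gso_sq (l + Suc d))"
    using LLL_gso_sq_step[of "l + Suc d"] Suc.prems by simp
  finally show ?case by (simp add: ac_simps)
qed

lemma LLL_basis_sq_le_gso_sq:
  assumes k: "1 \<le> k" "k \<le> m"
  shows "rinner n (b k) (b k) \<le> 2 ^ (k - 1) * gso_sq k"
proof -
  have term_le: "(gs_mu n b k l)\<^sup>2 * gso_sq l \<le> 1/4 * (2 ^ (k - l) * gso_sq k)" if "l \<in> {1..<k}" for l
    using that k LLL_gs_mu_sq_le[of l k] LLL_gso_sq_le[of l "k - l"]
    by (intro mult_mono) (auto simp: rinner_self_nonneg)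
  have "rinner n (b k) (b k) = gso_sq k + (\<Sum>l\<in>{1..<k}. (gs_mu n b k l)\<^sup>2 * gso_sq l)"
    by (rule rinner_basis_self)
  also have "\<dots> \<le> gso_sq k + (\<Sum>l\<in>{1..<k}. 1/4 * (2 ^ (k - l) * gso_sq k))"
    using term_le by (intro add_left_mono sum_mono) auto
  also have "\<dots> = gso_sq k * (1 + 1/4 * (\<Sum>l\<in>{1..<k}. 2 ^ (k - l)))"
    by (simp add: sum_distrib_left distrib_left mult.commute mult.left_commute)
  also have "\<dots> \<le> gso_sq k * (1 + 1/4 * (2 ^ k - 2))"
    using sum_pow2_diff_le[OF k(1)] by (intro mult_left_mono) (auto simp: rinner_self_nonneg)
  also have "\<dots> = gso_sq k * 2 ^ (k - 1) / 2 + gso_sq k / 2"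
  proof -
    obtain k' where "k = Suc k'" using k(1) by (cases k) auto
    then show ?thesis by (simp add: algebra_simps)
  qed
  also have "\<dots> \<le> gso_sq k * 2 ^ (k - 1)"
    using rinner_self_nonneg[of n "gso n b k"] mult_left_mono[of 1 "2 ^ (k - 1)" "gso_sq k"]
    by simp
  finally show ?thesis by (simp add: mult.commute)
qed

text \<open>The classical LLL lower bound: the component of \<open>v\<close> along \<open>b\<^sup>*\<^sub>K\<close> is \<open>d\<^sub>K b\<^sup>*\<^sub>K\<close>,
so \<open>\<parallel>v\<parallel> \<ge> \<parallel>b\<^sup>*\<^sub>K\<parallel> \<ge> 2\<^sup>-\<^sup>(\<^sup>K\<^sup>-\<^sup>1\<^sup>)\<^sup>/\<^sup>2 \<parallel>b\<^sub>K\<parallel>\<close>.\<close>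

lemma LLL_basis_sq_le_combination_sq:
  fixes d :: "nat \<Rightarrow> int"
  assumes K: "1 \<le> K" "K \<le> m" and dK: "d K \<noteq> 0"
    and d_above: "\<And>j. K < j \<Longrightarrow> j \<le> m \<Longrightarrow> d j = 0"
    and v: "v = (\<lambda>k. \<Sum>j\<in>{1..m}. of_int (d j) * b j k)"
  shows "rinner n (b K) (b K) \<le> 2 ^ (K - 1) * rinner n v v"
proof -
  have "rinner n v (gso n b K) = (\<Sum>j\<in>{1..m}. of_int (d j) * rinner n (b j) (gso n b K))"
    unfolding v by (rule rinner_sum_left)
  also have "\<dots> = (\<Sum>j\<in>{1..m}. if j = K then of_int (d K) * gso_sq K else 0)"
  proof (rule sum.cong)
    fix j assume "j \<in> {1..m}"
    then show "of_int (d j) * rinner n (b j) (gso n b K) = (if j = K then of_int (d K) * gso_sq K else 0)"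
      using d_above[of j] rinner_basis_gso_eq_0[of j K n b] rinner_basis_gso_self[of n b K]
      by (cases "j < K") auto
  qed simp
  finally have v_gso: "rinner n v (gso n b K) = of_int (d K) * gso_sq K"
    using K by simp
  have "0 \<le> rinner n (\<lambda>k. v k - of_int (d K) * gso n b K k) (\<lambda>k. v k - of_int (d K) * gso n b K k)"
    by (rule rinner_self_nonneg)
  also have "\<dots> = rinner n v v - (of_int (d K))\<^sup>2 * gso_sq K"
    unfolding rinner_diff_scaled_self v_gso by (simp add: power2_eq_square)
  finally have "(of_int (d K))\<^sup>2 * gso_sq K \<le> rinner n v v" by simp
  moreover have "1 \<le> (of_int (d K) :: real)\<^sup>2"
  proof -
    have "1 \<le> \<bar>(of_int (d K) :: real)\<bar>" using dK by linarith
    then show ?thesis by (metis one_le_power power2_abs)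
  qed
  then have "gso_sq K \<le> (of_int (d K))\<^sup>2 * gso_sq K"
    using rinner_self_nonneg[of n "gso n b K"] by (simp add: mult_le_cancel_right1)
  ultimately have "gso_sq K \<le> rinner n v v" by linarith
  then show ?thesis
    using LLL_basis_sq_le_gso_sq[OF K] by (meson mult_left_mono order_trans zero_le_numeral zero_le_power)
qed

end


section \<open>The lattice spanned by \<open>[P\<^sub>\<beta> | I\<^sub>m]\<close>\<close>

text \<open>\<open>aug_lift m p Pb x\<close> is the lattice vector \<open>x [P\<^sub>\<beta> | I\<^sub>m]\<close>.\<close>

definition aug_lift :: "nat \<Rightarrow> nat \<Rightarrow> (nat \<Rightarrow> nat \<Rightarrow> int) \<Rightarrow> (nat \<Rightarrow> int) \<Rightarrow> (nat \<Rightarrow> int)" where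
  "aug_lift m p Pb x = (\<lambda>k. \<Sum>l<m. x l * augrow m p Pb l k)"

lemma aug_lift_in_augLattice: "aug_lift m p Pb x \<in> augLattice m p Pb"
  unfolding aug_lift_def augLattice_def by (rule int_span_sum) (auto intro: int_span_base)

lemma aug_lift_low: "k < p \<Longrightarrow> aug_lift m p Pb x k = (\<Sum>l<m. x l * Pb l k)"
  unfolding aug_lift_def augrow_def by simp

lemma aug_lift_high: "l < m \<Longrightarrow> aug_lift m p Pb x (p + l) = x l"
proof -
  assume "l < m"
  have "aug_lift m p Pb x (p + l) = (\<Sum>l'<m. if l' = l then x l' else 0)"
    unfolding aug_lift_def augrow_def by (intro sum.cong) auto
  with \<open>l < m\<close> show ?thesis by simp
qed

lemma pr_aug_lift: "x \<in> zvecs m \<Longrightarrow> pr m p (aug_lift m p Pb x) = x"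
  by (auto simp: pr_def aug_lift_high zvecs_def)

text \<open>The relation \<open>w = pr(w) [P\<^sub>\<beta> | I\<^sub>m]\<close> is linear in \<open>w\<close> and holds for each row of
\<open>[P\<^sub>\<beta> | I\<^sub>m]\<close>, whose last \<open>m\<close> coordinates form a unit vector.\<close>

lemma aug_lift_pr: "w \<in> augLattice m p Pb \<Longrightarrow> aug_lift m p Pb (pr m p w) = w"
proof
  fix k assume w: "w \<in> augLattice m p Pb"
  have "\<forall>v\<in>augrow m p Pb ` {..<m}. v k = (\<Sum>l<m. v (p + l) * augrow m p Pb l k)"
  proof
    fix v assume "v \<in> augrow m p Pb ` {..<m}"
    then obtain j where j: "j < m" and v: "v = augrow m p Pb j" by blast
    have "(\<Sum>l<m. v (p + l) * augrow m p Pb l k) = (\<Sum>l<m. if l = j then augrow m p Pb l k else 0)"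
      unfolding v by (intro sum.cong) (auto simp: augrow_def)
    with j v show "v k = (\<Sum>l<m. v (p + l) * augrow m p Pb l k)" by simp
  qed
  from int_span_linear_relation[OF this w[unfolded augLattice_def]]
  show "aug_lift m p Pb (pr m p w) k = w k"
    unfolding aug_lift_def pr_def by (simp add: mult.commute)
qed

lemma znorm_L2_set: "znorm n x = L2_set (\<lambda>k. real_of_int (x k)) {..<n}"
  unfolding znorm_def rnorm_def L2_set_def ..

lemma znorm_sq: "(znorm n x)\<^sup>2 = rinner n (\<lambda>k. real_of_int (x k)) (\<lambda>k. real_of_int (x k))"
  unfolding znorm_def rnorm_sq ..

lemma znorm_nonneg: "0 \<le> znorm n x"
  unfolding znorm_L2_set by simp

lemma rnorm_vecmat_L2_set:
  "rnorm p (vecmat m p x P) = L2_set (\<lambda>k. \<Sum>l<m. real_of_int (x l) * P l k) {..<p}"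
  unfolding rnorm_def L2_set_def vecmat_def by (intro arg_cong[where f = sqrt] sum.cong) auto

lemma L2_set_lessThan_add_sq:
  fixes p m :: nat
  shows "(L2_set f {..<p + m})\<^sup>2 = (L2_set f {..<p})\<^sup>2 + (L2_set (\<lambda>l. f (p + l)) {..<m})\<^sup>2"
proof -
  have "(\<Sum>k<p + m. (f k)\<^sup>2) = (\<Sum>k<p. (f k)\<^sup>2) + (\<Sum>l<m. (f (p + l))\<^sup>2)"
    by (induction m) (simp_all add: add.assoc)
  then show ?thesis unfolding L2_set_def by (simp add: sum_nonneg)
qed

lemma abs_L2_set_diff_le: "\<bar>L2_set f A - L2_set g A\<bar> \<le> L2_set (\<lambda>k. f k - g k) A"
proof -
  have "L2_set f A \<le> L2_set g A + L2_set (\<lambda>k. f k - g k) A"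
    using L2_set_triangle_ineq[of g "\<lambda>k. f k - g k" A] by simp
  moreover have "L2_set g A \<le> L2_set f A + L2_set (\<lambda>k. f k - g k) A"
    using L2_set_triangle_ineq[of f "\<lambda>k. g k - f k" A] by (simp add: L2_set_def power2_commute)
  ultimately show ?thesis by linarith
qed

lemma znorm_aug_lift_sq:
  "(znorm (p + m) (aug_lift m p Pb x))\<^sup>2
     = (L2_set (\<lambda>k. \<Sum>l<m. real_of_int (x l) * real_of_int (Pb l k)) {..<p})\<^sup>2 + (znorm m x)\<^sup>2"
proof -
  have "L2_set (\<lambda>k. real_of_int (aug_lift m p Pb x k)) {..<p}
      = L2_set (\<lambda>k. \<Sum>l<m. real_of_int (x l) * real_of_int (Pb l k)) {..<p}"
    by (rule L2_set_cong) (simp_all add: aug_lift_low)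
  moreover have "L2_set (\<lambda>l. real_of_int (aug_lift m p Pb x (p + l))) {..<m}
      = L2_set (\<lambda>l. real_of_int (x l)) {..<m}"
    by (rule L2_set_cong) (simp_all add: aug_lift_high)
  ultimately show ?thesis unfolding znorm_L2_set L2_set_lessThan_add_sq by simp
qed

text \<open>Rounding \<open>\<beta>P\<close> to \<open>P\<^sub>\<beta>\<close> moves each coordinate of \<open>x P\<close> by at most
\<open>\<Sum>\<^sub>l |x\<^sub>l|/2 \<le> \<surd>m \<parallel>x\<parallel>/2\<close> (Cauchy--Schwarz), and there are \<open>p \<le> m\<close> coordinates.\<close>

lemma rounding_error_le:
  assumes round: "\<forall>j<m. \<forall>k<p. \<bar>real_of_int (Pb j k) - \<beta> * P j k\<bar> \<le> 1/2" and "p \<le> m" and "\<beta> > 0"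
  shows "\<bar>\<beta> * rnorm p (vecmat m p x P) - L2_set (\<lambda>k. \<Sum>l<m. real_of_int (x l) * real_of_int (Pb l k)) {..<p}\<bar>
     \<le> real m / 2 * znorm m x"
proof -
  define c where "c = znorm m x"
  define e where "e k = \<beta> * (\<Sum>l<m. real_of_int (x l) * P l k) - (\<Sum>l<m. real_of_int (x l) * real_of_int (Pb l k))" for k
  have coord: "\<bar>e k\<bar> \<le> sqrt m * c / 2" if "k < p" for k
  proof -
    have "\<bar>e k\<bar> = \<bar>\<Sum>l<m. real_of_int (x l) * (\<beta> * P l k - real_of_int (Pb l k))\<bar>"
      unfolding e_def by (simp add: sum_distrib_left right_diff_distrib sum_subtractf mult.left_commute)
    also have "\<dots> \<le> (\<Sum>l<m. \<bar>real_of_int (x l)\<bar> * \<bar>1/2\<bar>)"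
    proof (intro order_trans[OF sum_abs] sum_mono)
      fix l assume "l \<in> {..<m}"
      then have "\<bar>\<beta> * P l k - real_of_int (Pb l k)\<bar> \<le> \<bar>1/2\<bar>"
        using round that by (auto simp: abs_minus_commute)
      then show "\<bar>real_of_int (x l) * (\<beta> * P l k - real_of_int (Pb l k))\<bar> \<le> \<bar>real_of_int (x l)\<bar> * \<bar>1/2\<bar>"
        unfolding abs_mult by (intro mult_left_mono) auto
    qed
    also have "\<dots> = 1/2 * (\<Sum>l<m. \<bar>real_of_int (x l)\<bar> * \<bar>1\<bar>)"
      by (simp add: sum_distrib_left)
    also have "\<dots> \<le> 1/2 * (c * L2_set (\<lambda>l. 1) {..<m})"
      unfolding c_def znorm_L2_set by (intro mult_left_mono L2_set_mult_ineq) auto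
    also have "\<dots> = sqrt m * c / 2" by (simp add: L2_set_constant)
    finally show ?thesis .
  qed
  have "\<bar>\<beta> * rnorm p (vecmat m p x P) - L2_set (\<lambda>k. \<Sum>l<m. real_of_int (x l) * real_of_int (Pb l k)) {..<p}\<bar>
      \<le> L2_set e {..<p}"
    unfolding rnorm_vecmat_L2_set e_def L2_set_right_distrib[OF less_imp_le[OF \<open>\<beta> > 0\<close>]]
    by (rule abs_L2_set_diff_le)
  also have "\<dots> = L2_set (\<lambda>k. \<bar>e k\<bar>) {..<p}" by (simp add: L2_set_def)
  also have "\<dots> \<le> L2_set (\<lambda>k. sqrt m * c / 2) {..<p}"
    using coord by (intro L2_set_mono) auto
  also have "\<dots> = sqrt p * (sqrt m * c / 2)" by (simp add: L2_set_constant c_def znorm_nonneg)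
  also have "\<dots> \<le> sqrt m * (sqrt m * c / 2)"
    using \<open>p \<le> m\<close> by (intro mult_right_mono) (auto simp: c_def znorm_nonneg)
  also have "\<dots> = real m / 2 * c" by simp
  finally show ?thesis unfolding c_def .
qed


lemma add_scaled_lt_of_sum_squares_le:
  fixes a c B M :: real
  assumes "0 \<le> a" "0 \<le> c" "a\<^sup>2 + c\<^sup>2 \<le> B\<^sup>2" "0 < B" "2 \<le> M"
  shows "a + M/2 * c < M * B"
proof -
  have "(a + M/2 * c)\<^sup>2 \<le> (1 + M\<^sup>2/4) * (a\<^sup>2 + c\<^sup>2)"
  proof -
    have "(1 + M\<^sup>2/4) * (a\<^sup>2 + c\<^sup>2) - (a + M/2 * c)\<^sup>2 = (M/2 * a - c)\<^sup>2"
      by (simp add: power2_eq_square algebra_simps)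
    moreover have "0 \<le> (M/2 * a - c)\<^sup>2" by simp
    ultimately show ?thesis by linarith
  qed
  also have "\<dots> \<le> (1 + M\<^sup>2/4) * B\<^sup>2" using assms by (intro mult_left_mono) auto
  also have "\<dots> < M\<^sup>2 * B\<^sup>2"
  proof -
    have "2 * 2 \<le> M * M" using assms(5) by (intro mult_mono) auto
    then have "1 + M\<^sup>2/4 < M\<^sup>2" by (simp add: power2_eq_square)
    with \<open>0 < B\<close> show ?thesis by simp
  qed
  also have "\<dots> = (M * B)\<^sup>2" by (simp add: power_mult_distrib)
  finally have "(a + M/2 * c)\<^sup>2 < (M * B)\<^sup>2" .
  moreover have "0 \<le> M * B" using assms by simp
  ultimately show ?thesis by (rule power2_less_imp_less)
qed

lemma sum_squares_lt_of_lt_add_scaled: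
  fixes a c B M :: real
  assumes "0 \<le> a" "0 \<le> c" "c \<le> B" "a < M * B + M/2 * c" "1 \<le> M"
  shows "a\<^sup>2 + c\<^sup>2 < 4 * M\<^sup>2 * B\<^sup>2"
proof -
  have "M/2 * c \<le> M/2 * B" using assms by (intro mult_left_mono) auto
  then have "a < 3/2 * (M * B)" using assms by linarith
  then have "a\<^sup>2 < (3/2 * (M * B))\<^sup>2" using assms by (intro power_strict_mono) auto
  moreover have "c\<^sup>2 \<le> (M * B)\<^sup>2"
    using assms by (intro power_mono) (auto intro: order_trans[OF _ mult_right_mono[of 1 M B]])
  moreover have "(3/2 * (M * B))\<^sup>2 = 9/4 * (M * B)\<^sup>2" by (simp add: power2_eq_square)
  moreover have "0 \<le> (M * B)\<^sup>2" by simp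
  ultimately have "a\<^sup>2 + c\<^sup>2 < 4 * (M * B)\<^sup>2" by linarith
  then show ?thesis by (simp add: power_mult_distrib)
qed

lemma pr_short_augLattice_vector:
  assumes round: "\<forall>j<m. \<forall>k<p. \<bar>real_of_int (Pb j k) - \<beta> * P j k\<bar> \<le> 1/2"
    and "2 \<le> m" "p \<le> m" "\<beta> > 0"
    and w: "w \<in> augLattice m p Pb" and "0 < B" and w_short: "znorm (p + m) w \<le> B"
  shows "znorm m (pr m p w) \<le> B" "rnorm p (vecmat m p (pr m p w) P) < real m * B / \<beta>"
proof -
  define x where "x = pr m p w"
  define a where "a = L2_set (\<lambda>k. \<Sum>l<m. real_of_int (x l) * real_of_int (Pb l k)) {..<p}"
  have "a\<^sup>2 + (znorm m x)\<^sup>2 = (znorm (p + m) w)\<^sup>2"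
    unfolding a_def x_def znorm_aug_lift_sq[symmetric] aug_lift_pr[OF w] ..
  also have "\<dots> \<le> B\<^sup>2" using w_short by (intro power_mono znorm_nonneg)
  finally have sq: "a\<^sup>2 + (znorm m x)\<^sup>2 \<le> B\<^sup>2" .
  then have "(znorm m x)\<^sup>2 \<le> B\<^sup>2" using zero_le_power2[of a] by linarith
  with \<open>0 < B\<close> show "znorm m (pr m p w) \<le> B"
    using power2_le_imp_le[of "znorm m x" B] unfolding x_def by simp
  have "\<beta> * rnorm p (vecmat m p x P) \<le> a + real m / 2 * znorm m x"
    using rounding_error_le[OF round \<open>p \<le> m\<close> \<open>\<beta> > 0\<close>, of x] unfolding a_def by linarith
  also have "\<dots> < real m * B"
    by (rule add_scaled_lt_of_sum_squares_le)
      (use \<open>2 \<le> m\<close> \<open>0 < B\<close> sq in \<open>simp_all add: a_def znorm_nonneg\<close>)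
  finally show "rnorm p (vecmat m p (pr m p w) P) < real m * B / \<beta>"
    unfolding x_def[symmetric] using \<open>\<beta> > 0\<close> by (simp add: pos_less_divide_eq mult.commute)
qed

lemma aug_lift_short:
  assumes round: "\<forall>j<m. \<forall>k<p. \<bar>real_of_int (Pb j k) - \<beta> * P j k\<bar> \<le> 1/2"
    and "1 \<le> m" "p \<le> m" "\<beta> > 0"
    and "znorm m x \<le> B" and "rnorm p (vecmat m p x P) < real m * B / \<beta>"
  shows "(znorm (p + m) (aug_lift m p Pb x))\<^sup>2 < 4 * (real m)\<^sup>2 * B\<^sup>2"
proof -
  define a where "a = L2_set (\<lambda>k. \<Sum>l<m. real_of_int (x l) * real_of_int (Pb l k)) {..<p}"
  have "\<beta> * rnorm p (vecmat m p x P) < real m * B"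
    using assms(4,6) by (simp add: pos_less_divide_eq mult.commute)
  then have "a < real m * B + real m / 2 * znorm m x"
    using rounding_error_le[OF round \<open>p \<le> m\<close> \<open>\<beta> > 0\<close>, of x] unfolding a_def by linarith
  then have "a\<^sup>2 + (znorm m x)\<^sup>2 < 4 * (real m)\<^sup>2 * B\<^sup>2"
    using assms(2,5) by (intro sum_squares_lt_of_lt_add_scaled) (simp_all add: a_def znorm_nonneg)
  then show ?thesis unfolding znorm_aug_lift_sq a_def .
qed

lemma lattice_basis_unit_combination:
  fixes j m :: nat
  assumes "j \<in> {1..m}"
  shows "(\<Sum>i=1..m. (if i = j then 1 else 0) * b i k) = (b j k :: int)"
proof -
  have "(\<Sum>i=1..m. (if i = j then 1 else 0) * b i k) = (\<Sum>i=1..m. if i = j then b i k else 0)"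
    by (intro sum.cong) auto
  also have "\<dots> = b j k" using assms by simp
  finally show ?thesis .
qed

lemma lattice_basis_inj:
  assumes "is_lattice_basis n m b L"
  shows "inj_on b {1..m}"
proof (rule inj_onI, rule ccontr)
  fix j j' assume j: "j \<in> {1..m}" "j' \<in> {1..m}" "b j = b j'" "j \<noteq> j'"
  define c :: "nat \<Rightarrow> int" where "c i = (if i = j then 1 else 0) - (if i = j' then 1 else 0)" for i
  have "(\<Sum>i=1..m. c i * b i k) = 0" for k
    using lattice_basis_unit_combination[OF j(1), of b k] lattice_basis_unit_combination[OF j(2), of b k] j(3)
    unfolding c_def by (simp add: left_diff_distrib sum_subtractf)
  then have "c j = 0" using assms j unfolding is_lattice_basis_def by blast
  with j(4) show False unfolding c_def by simp
qed

lemma lattice_basis_znorm_pos: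
  assumes basis: "is_lattice_basis n m b L" and j: "j \<in> {1..m}"
  shows "0 < znorm n (b j)"
proof -
  have "\<exists>k<n. b j k \<noteq> 0"
  proof (rule ccontr)
    assume "\<not> (\<exists>k<n. b j k \<noteq> 0)"
    moreover have "b j k = 0" if "n \<le> k" for k
      using basis j that unfolding is_lattice_basis_def zvecs_def by auto
    ultimately have "b j k = 0" for k by (meson not_le)
    then have "(\<Sum>i=1..m. (if i = j then 1 else 0) * b i k) = 0" for k
      using lattice_basis_unit_combination[OF j, of b k] by simp
    then have "(1::int) = 0" using basis j unfolding is_lattice_basis_def by fastforce
    then show False by simp
  qed
  then obtain k where k: "k < n" "b j k \<noteq> 0" by blast
  have "0 < (real_of_int (b j k))\<^sup>2" using k by simp
  also have "\<dots> \<le> (\<Sum>k'<n. (real_of_int (b j k'))\<^sup>2)"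
    using k by (intro member_le_sum) auto
  finally show ?thesis unfolding znorm_def rnorm_def by simp
qed

lemma sorted_znorm_mono:
  assumes sorted: "\<forall>j\<in>{1..<m}. znorm n (b j) \<le> znorm n (b (Suc j))"
    and "1 \<le> j" "j \<le> j'" "j' \<le> m"
  shows "znorm n (b j) \<le> znorm n (b j')"
  using assms(3,4)
proof (induction j' rule: dec_induct)
  case (step j')
  then have "znorm n (b j) \<le> znorm n (b j')" by simp
  also have "\<dots> \<le> znorm n (b (Suc j'))" using sorted step \<open>1 \<le> j\<close> by auto
  finally show ?case .
qed simp

lemma LLL_short_vector_in_initial_span:
  fixes b :: "nat \<Rightarrow> nat \<Rightarrow> int"
  assumes basis: "is_lattice_basis n m b L"
    and LLL: "LLL_reduced (3/4) n m (\<lambda>i k. real_of_int (b i k))"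
    and sorted: "\<forall>j\<in>{1..<m}. znorm n (b j) \<le> znorm n (b (Suc j))"
    and "i < m" and "w \<in> L"
    and short: "2 ^ (m - 1) * (znorm n w)\<^sup>2 < (znorm n (b (Suc i)))\<^sup>2"
  shows "w \<in> int_span (b ` {1..i})"
proof -
  have "w \<in> int_span (b ` {1..m})" using basis \<open>w \<in> L\<close> unfolding is_lattice_basis_def by blast
  then obtain d where d: "\<And>k. w k = (\<Sum>j\<in>{1..m}. d j * b j k)"
    using int_span_image_coeffs lattice_basis_inj[OF basis] by blast
  have d_zero: "d j = 0" if "i < j" "j \<le> m" for j
  proof (rule ccontr)
    assume "d j \<noteq> 0"
    with that obtain K where K: "i < K" "K \<le> m" "d K \<noteq> 0"
      and last: "\<And>j'. i < j' \<and> j' \<le> m \<and> d j' \<noteq> 0 \<Longrightarrow> j' \<le> K"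
      using Nat.ex_has_greatest_nat[of "\<lambda>j. i < j \<and> j \<le> m \<and> d j \<noteq> 0" j m] by blast
    have d_above: "d j' = 0" if "K < j'" "j' \<le> m" for j'
      using last[of j'] K that by fastforce
    have w_real: "(\<lambda>k. real_of_int (w k)) = (\<lambda>k. \<Sum>j\<in>{1..m}. of_int (d j) * real_of_int (b j k))"
      by (simp add: d)
    have "(znorm n (b (Suc i)))\<^sup>2 \<le> (znorm n (b K))\<^sup>2"
      using K \<open>i < m\<close> by (intro power_mono sorted_znorm_mono[OF sorted] znorm_nonneg) auto
    also have "\<dots> \<le> 2 ^ (K - 1) * (znorm n w)\<^sup>2"
      unfolding znorm_sq using K d_above
      by (intro LLL_basis_sq_le_combination_sq[OF LLL _ _ _ _ w_real]) auto
    also have "\<dots> \<le> 2 ^ (m - 1) * (znorm n w)\<^sup>2"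
      using K by (intro mult_right_mono power_increasing) auto
    finally show False using short by simp
  qed
  have "w = (\<lambda>k. \<Sum>j\<in>{1..i}. d j * b j k)"
  proof
    fix k
    have "w k = (\<Sum>j\<in>{1..m}. d j * b j k)" by (rule d)
    also have "\<dots> = (\<Sum>j\<in>{1..i}. d j * b j k)"
      using \<open>i < m\<close> d_zero by (intro sum.mono_neutral_right) auto
    finally show "w k = (\<Sum>j\<in>{1..i}. d j * b j k)" .
  qed
  also have "\<dots> \<in> int_span (b ` {1..i})"
    by (intro int_span_sum) (auto intro: int_span_base)
  finally show ?thesis .
qed

lemma kappa_bound:
  assumes "1 \<le> m" "0 \<le> B" "B \<le> 1 / real m * 2 powr (- (real m + 1) / 2) * Z"
  shows "2 ^ (m - 1) * (4 * (real m)\<^sup>2 * B\<^sup>2) \<le> Z\<^sup>2"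
proof -
  define Q where "Q = 2 powr (- (real m + 1) / 2)"
  have Q_sq: "Q\<^sup>2 * 2 ^ (m + 1) = 1"
  proof -
    have "Q\<^sup>2 = 2 powr (- (real m + 1))"
      unfolding Q_def by (simp add: power2_eq_square flip: powr_add)
    moreover have "(2::real) ^ (m + 1) = 2 powr (real m + 1)"
      by (simp add: powr_realpow[symmetric] powr_add)
    ultimately show ?thesis by (simp flip: powr_add)
  qed
  have "real m * B \<le> Q * Z"
    using assms by (simp add: Q_def field_simps)
  then have "(real m * B)\<^sup>2 \<le> (Q * Z)\<^sup>2"
    using assms by (intro power_mono) auto
  have "2 ^ (m - 1) * (4 * (real m)\<^sup>2 * B\<^sup>2) = 2 ^ (m + 1) * (real m * B)\<^sup>2"
    using assms(1) by (cases m) (simp_all add: power_mult_distrib)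
  also have "\<dots> \<le> 2 ^ (m + 1) * (Q * Z)\<^sup>2"
    using \<open>(real m * B)\<^sup>2 \<le> (Q * Z)\<^sup>2\<close> by simp
  also have "\<dots> = (Q\<^sup>2 * 2 ^ (m + 1)) * Z\<^sup>2"
    by (simp only: power_mult_distrib mult_ac)
  also have "\<dots> = Z\<^sup>2"
    using Q_sq by simp
  finally show ?thesis .
qed

theorem lemma4p2:
  fixes m p :: nat and P :: "nat \<Rightarrow> nat \<Rightarrow> real" and \<beta> :: real
    and Pb :: "nat \<Rightarrow> nat \<Rightarrow> int" and b :: "nat \<Rightarrow> (nat \<Rightarrow> int)"
    and i :: nat and B :: real
  assumes "2 \<le> m" and "1 \<le> p" and "p \<le> m"
    and "\<beta> > 0"
    and "\<forall>j<m. \<forall>k<p. \<bar>real_of_int (Pb j k) - \<beta> * P j k\<bar> \<le> 1/2"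
    and "is_lattice_basis (p + m) m b (augLattice m p Pb)"
    and "LLL_reduced (3/4) (p + m) m (\<lambda>i k. real_of_int (b i k))"
    and "\<forall>j\<in>{1..<m}. znorm (p + m) (b j) \<le> znorm (p + m) (b (Suc j))"
    and "i < m"
    and "(if i = 0 then 0 else znorm (p + m) (b i)) \<le> B"
    and "B \<le> (1 / real m) * 2 powr (- (real m + 1) / 2) * znorm (p + m) (b (Suc i))"
  shows "Lam m p P B (real m * B / \<beta>) = int_span ((\<lambda>j. pr m p (b j)) ` {1..i})"
proof -
  note round = assms(5) and basis = assms(6) and sorted = assms(8)
  define G where "G = {x \<in> zvecs m. znorm m x \<le> B \<and> rnorm p (vecmat m p x P) < real m * B / \<beta>}"
  have span_basis: "int_span (b ` {1..m}) = augLattice m p Pb"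
    using basis unfolding is_lattice_basis_def by blast
  have "pr m p (b j) \<in> G" if j: "j \<in> {1..i}" for j
  proof -
    have "znorm (p + m) (b j) \<le> B"
      using sorted_znorm_mono[OF sorted, of j i] assms(9,10) j by auto
    moreover have "0 < znorm (p + m) (b j)"
      using lattice_basis_znorm_pos[OF basis] j assms(9) by auto
    moreover have "b j \<in> augLattice m p Pb"
      using j assms(9) by (auto intro: int_span_base simp flip: span_basis)
    ultimately show ?thesis
      using pr_short_augLattice_vector[OF round assms(1,3,4), of "b j" B]
      unfolding G_def by (auto simp: pr_def zvecs_def)
  qed
  then have "int_span (pr m p ` b ` {1..i}) \<subseteq> int_span G"
    by (intro int_span_subset_int_span) (auto intro: int_span_base)
  moreover have "x \<in> int_span (pr m p ` b ` {1..i})" if x: "x \<in> G" for x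
  proof -
    have "0 \<le> B" using assms(10) znorm_nonneg[of "p + m" "b i"] by (auto split: if_splits)
    then have "2 ^ (m - 1) * (znorm (p + m) (aug_lift m p Pb x))\<^sup>2 < (znorm (p + m) (b (Suc i)))\<^sup>2"
      using aug_lift_short[OF round _ assms(3,4), of x B] kappa_bound[OF _ _ assms(11)] x assms(1)
      by (intro order.strict_trans2[OF mult_strict_left_mono]) (auto simp: G_def)
    then have "aug_lift m p Pb x \<in> int_span (b ` {1..i})"
      by (rule LLL_short_vector_in_initial_span[OF basis assms(7) sorted assms(9) aug_lift_in_augLattice])
    then have "pr m p (aug_lift m p Pb x) \<in> int_span (pr m p ` b ` {1..i})"
      by (rule pr_int_span)
    moreover have "pr m p (aug_lift m p Pb x) = x"
      using x pr_aug_lift unfolding G_def by blast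
    ultimately show ?thesis by simp
  qed
  ultimately show ?thesis
    unfolding Lam_def G_def[symmetric] image_image[symmetric, of "pr m p" b]
    by (auto dest: int_span_subset_int_span[OF subsetI])
qed

end
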